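(* Let $1 \le n_s < n$ and $m \ge 1$. Let $\{\mathbf{W}(t)\}_{t \geq 0}$ be i.i.d. random $n \times n$ row-stochastic matrices of the block form $$\mathbf{W}(t) = \begin{pmatrix} \mathbf{I}_{n_s} & \mathbf{0} \\ \mathbf{B}(t) & \mathbf{D}(t) \end{pmatrix}, \qquad \overline{\mathbf{W}} = \mathbb{E}\{\mathbf{W}(t)\} = \begin{pmatrix} \mathbf{I}_{n_s} & \mathbf{0} \\ \overline{\mathbf{B}} & \overline{\mathbf{D}} \end{pmatrix},$$ with $\|\overline{\mathbf{D}}\|_2 < 1$ and $\|\overline{\mathbf{D}}\|_2 = \mathbb{E}\{\|\mathbf{D}(t)\|_2\}$. Let $\mathbf{x}(0;s) \in \mathbb{R}^{n \times m}$ and $\mathbf{x}(t+1;s) = \mathbf{W}(t)\mathbf{x}(t;s)$. Observations are $\mathbf{y}(t_i;s) = \mathbf{x}(t_i;s) + \mathbf{n}(t_i;s)$, where the entries of $\mathbf{n}(t_i;s)$ are i.i.d. zero-mean with variance bounded by $\sigma^2$, independent of $\{\mathbf{W}(t)\}$. Given a finite set of distinct sampling times $\mathcal{T}_s$ with $t_i \geq T_o$ for all $t_i \in \mathcal{T}_s$, define $$\hat{\mathbf{x}}(\mathcal{T}_s;s) = \frac{1}{|\mathcal{T}_s|}\sum_{t_i \in \mathcal{T}_s}\mathbf{y}(t_i;s),$$ and let $\overline{\mathbf{x}}(\infty;s) = \lim_{t\to\infty}\mathbb{E}\{\mathbf{x}(t;s)\mid \mathbf{x}(0;s)\} = \overline{\mathbf{W}}^\infty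 \mathbf{x}(0;s)$, where $\overline{\mathbf{W}}^\infty = \begin{pmatrix} \mathbf{I}_{n_s} & \mathbf{0} \\ (\mathbf{I}-\overline{\mathbf{D}})^{-1}\overline{\mathbf{B}} & \mathbf{0}\end{pmatrix}$. Then, as $T_o \to \infty$: (1) the estimator is unbiased: $\mathbb{E}\{\hat{\mathbf{x}}(\mathcal{T}_s;s)\mid\mathbf{x}(0;s)\} = \overline{\mathbf{x}}(\infty;s)$; (2) the estimator is consistent: $\lim_{|\mathcal{T}_s|\to\infty}\mathbb{E}\{\|\hat{\mathbf{x}}(\mathcal{T}_s;s) - \overline{\mathbf{x}}(\infty;s)\|_F^2 \mid \mathbf{x}(0;s)\} = 0$.
   Context: This models randomized DeGroot opinion dynamics on $n$ agents discussing an issue $s$, where the first $n_s$ agents are stubborn (their rows of $\mathbf{W}(t)$ are rows of the identity), each row of $\mathbf{x}(t;s)$ is an agent's opinion vector, and $\mathbf{y}$ are noisy snapshots of opinions. $\|\cdot\|_2$ is the spectral norm and $\|\cdot\|_F$ the Frobenius norm. *)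

theory Defs
  imports "HOL-Probability.Probability"
begin

text \<open>Agents are indexed by the sum type 's + 'f: Inl = stubborn agents (n_s = CARD('s) \<ge> 1),
  Inr = non-stubborn agents (CARD('f) \<ge> 1, so n_s < n).  Opinion dimension m = CARD('m) \<ge> 1.\<close>

definition spec_norm :: "real^'n^'m \<Rightarrow> real" where
  "spec_norm A = onorm (\<lambda>x. A *v x)"

definition row_stochastic :: "real^'n^'n \<Rightarrow> bool" where
  "row_stochastic A \<longleftrightarrow> (\<forall>i j. 0 \<le> A $ i $ j) \<and> (\<forall>i. (\<Sum>j\<in>UNIV. A $ i $ j) = 1)"

definition stubborn_block :: "real^('s::finite + 'f::finite)^('s + 'f) \<Rightarrow> bool" where
  "stubborn_block A \<longleftrightarrow>
     (\<forall>i j. A $ Inl i $ Inl j = (if i = j then 1 else 0)) \<and> (\<forall>i j. A $ Inl i $ Inr j = 0)"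

definition blockB :: "real^('s::finite + 'f::finite)^('s + 'f) \<Rightarrow> real^'s^'f" where
  "blockB A = (\<chi> i j. A $ Inr i $ Inl j)"

definition blockD :: "real^('s::finite + 'f::finite)^('s + 'f) \<Rightarrow> real^'f^'f" where
  "blockD A = (\<chi> i j. A $ Inr i $ Inr j)"

definition Winf :: "real^('s::finite + 'f::finite)^('s + 'f) \<Rightarrow> real^('s + 'f)^('s + 'f)" where
  "Winf A = (\<chi> i j. case i of
      Inl a \<Rightarrow> (if j = Inl a then 1 else 0)
    | Inr b \<Rightarrow> (case j of
         Inl a \<Rightarrow> (matrix_inv (mat 1 - blockD A) ** blockB A) $ b $ a
       | Inr _ \<Rightarrow> 0))"

fun opinion :: "(nat \<Rightarrow> 'a \<Rightarrow> real^'n^'n) \<Rightarrow> real^'m^'n \<Rightarrow> nat \<Rightarrow> 'a \<Rightarrow> real^'m^'n" where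
  "opinion W X0 0 \<omega> = X0"
| "opinion W X0 (Suc t) \<omega> = W t \<omega> ** opinion W X0 t \<omega>"

definition estimator ::
  "(nat \<Rightarrow> 'a \<Rightarrow> real^'n^'n) \<Rightarrow> real^'m^'n \<Rightarrow> (nat \<Rightarrow> 'a \<Rightarrow> real^'m^'n) \<Rightarrow> nat set \<Rightarrow> 'a \<Rightarrow> real^'m^'n" where
  "estimator W X0 Nz T \<omega> = (1 / real (card T)) *\<^sub>R (\<Sum>t\<in>T. opinion W X0 t \<omega> + Nz t \<omega>)"

end

theory Submission
  imports Defs
begin

text \<open>
  Let \<open>e(t) = x(t) - x\<^sub>\<infinity>\<close>, where \<open>x\<^sub>\<infinity> = Winf Wbar ** x(0)\<close> is a fixed point of the mean
  matrix \<open>Wbar\<close> with the same stubborn rows as \<open>x(0)\<close>. The stubborn rows of \<open>e(t)\<close> vanish,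
  and on such matrices \<open>Wbar\<close> contracts the Frobenius norm by \<open>\<rho> = \<parallel>Dbar\<parallel>\<^sub>2 < 1\<close>.
  Since \<open>W(t)\<close> is independent of the past, \<open>E x(t) = Wbar ^ t x(0)\<close>, so the bias of the
  estimator is at most \<open>\<rho> ^ T\<^sub>o \<parallel>x(0) - x\<^sub>\<infinity>\<parallel>\<close>; likewise
  \<open>E\<langle>e(t), e(t + k)\<rangle> = E\<langle>e(t), Wbar ^ k e(t)\<rangle>\<close>, so the correlations of \<open>e\<close> decay like
  \<open>\<rho> ^ |t - t'|\<close>. The noise is white and independent of the opinions, hence the mean square
  error of an average of \<open>N\<close> observations is \<open>O(1/N)\<close>, uniformly in the sampling times.
\<close>

lemma scaleR_average_const:
  fixes c :: "'a::real_vector"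
  assumes "finite T" "T \<noteq> {}"
  shows "(1 / real (card T)) *\<^sub>R (\<Sum>t\<in>T. c) = c"
  using assms by (simp add: sum_constant_scaleR del: sum_constant)

text \<open>With truncated subtraction, \<open>t - t' + (t' - t)\<close> is \<open>|t - t'|\<close>.\<close>
lemma sum_power_dist_le:
  fixes r :: real
  assumes r: "0 \<le> r" "r < 1" and T: "finite T"
  shows "(\<Sum>t'\<in>T. r ^ (t - t' + (t' - t))) \<le> 2 / (1 - r)"
proof -
  have geometric: "(\<Sum>i<n. r ^ i) \<le> 1 / (1 - r)" for n
    using r by (simp add: sum_gp_strict divide_right_mono)
  obtain L where "T \<subseteq> {..<L}"
    using finite_nat_bounded[OF T] by blast
  then have "T \<subseteq> {..<t} \<union> {t..<t+L}" by auto
  then have "(\<Sum>t'\<in>T. r ^ (t - t' + (t' - t))) \<le> (\<Sum>t'\<in>{..<t} \<union> {t..<t+L}. r ^ (t - t' + (t' - t)))"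
    using r by (intro sum_mono2) auto
  also have "\<dots> = (\<Sum>t'<t. r ^ (t - t')) + (\<Sum>t'\<in>{t..<t+L}. r ^ (t' - t))"
    by (subst sum.union_disjoint) auto
  also have "(\<Sum>t'<t. r ^ (t - t')) = (\<Sum>i<t. r ^ Suc i)"
    by (subst sum.nat_diff_reindex[symmetric]) (intro sum.cong, auto simp: Suc_diff_Suc)
  also have "(\<Sum>t'\<in>{t..<t+L}. r ^ (t' - t)) = (\<Sum>i<L. r ^ i)"
    using sum.shift_bounds_nat_ivl[of "\<lambda>t'. r ^ (t' - t)" 0 t L] by (simp add: atLeast0LessThan add.commute)
  also have "(\<Sum>i<t. r ^ Suc i) \<le> (\<Sum>i<t. r ^ i)"
    using r by (intro sum_mono) (simp add: mult_left_le_one_le)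
  also have "(\<Sum>i<t. r ^ i) + (\<Sum>i<L. r ^ i) \<le> 1 / (1 - r) + 1 / (1 - r)"
    by (intro add_mono geometric)
  finally show ?thesis by simp
qed

lemma power_mult_eventually_less:
  fixes r c \<epsilon> :: real
  assumes "0 \<le> r" "r < 1" "0 < \<epsilon>"
  shows "\<exists>n. r ^ n * c < \<epsilon>"
proof -
  have "(\<lambda>n. r ^ n * c) \<longlonglongrightarrow> 0"
    using assms by (intro tendsto_mult_left_zero LIMSEQ_power_zero) simp
  from order_tendstoD(2)[OF this assms(3)] show ?thesis
    by (auto dest: eventually_happens)
qed

section \<open>Matrices\<close>

fun mat_prod :: "(nat \<Rightarrow> 'a::semiring_1^'n^'n) \<Rightarrow> nat \<Rightarrow> nat \<Rightarrow> 'a^'n^'n" where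
  "mat_prod g a 0 = mat 1"
| "mat_prod g a (Suc k) = g (a + k) ** mat_prod g a k"

abbreviation mat_pow :: "'a::semiring_1^'n^'n \<Rightarrow> nat \<Rightarrow> 'a^'n^'n" where
  "mat_pow A k \<equiv> mat_prod (\<lambda>_. A) 0 k"

lemma opinion_eq_mat_prod: "opinion W X0 t \<omega> = mat_prod (\<lambda>i. W i \<omega>) 0 t ** X0"
  by (induction t) (simp_all add: matrix_mul_assoc)

lemma mat_prod_add: "mat_prod g a (t + k) = mat_prod g (a + t) k ** mat_prod g a t"
  by (induction k) (simp_all add: matrix_mul_assoc add.assoc)

lemma mat_prod_cong: "(\<And>i. a \<le> i \<Longrightarrow> i < a + k \<Longrightarrow> g i = h i) \<Longrightarrow> mat_prod g a k = mat_prod h a k"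
  by (induction k) auto

lemma matrix_mult_diff_left: "(A::'a::ring_1^'k^'n) ** (B - C) = A ** B - A ** C"
  by (simp add: vec_eq_iff matrix_matrix_mult_def algebra_simps sum_subtractf)

lemma matrix_mult_diff_right: "((A::'a::ring_1^'k^'n) - B) ** C = A ** C - B ** C"
  by (simp add: vec_eq_iff matrix_matrix_mult_def algebra_simps sum_subtractf)

lemma norm_matrix_power2: "(norm (A::real^'m^'n))\<^sup>2 = (\<Sum>i\<in>UNIV. \<Sum>j\<in>UNIV. (A$i$j)\<^sup>2)"
  unfolding power2_norm_eq_inner inner_vec_def by (simp add: power2_eq_square)

lemma inner_matrix: "inner (A::real^'m^'n) B = (\<Sum>i\<in>UNIV. \<Sum>j\<in>UNIV. A$i$j * B$i$j)"
  by (simp add: inner_vec_def)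

lemma inner_matrix_mult_right:
  "inner (U::real^'m^'n) (Q ** V) = (\<Sum>i\<in>UNIV. \<Sum>l\<in>UNIV. Q$i$l * (\<Sum>j\<in>UNIV. U$i$j * V$l$j))"
proof -
  have "inner U (Q ** V) = (\<Sum>i\<in>UNIV. \<Sum>j\<in>UNIV. \<Sum>l\<in>UNIV. Q$i$l * (U$i$j * V$l$j))"
    by (simp add: inner_matrix matrix_matrix_mult_def sum_distrib_left mult_ac)
  also have "\<dots> = (\<Sum>i\<in>UNIV. \<Sum>l\<in>UNIV. \<Sum>j\<in>UNIV. Q$i$l * (U$i$j * V$l$j))"
    by (intro sum.cong refl sum.swap)
  finally show ?thesis by (simp add: sum_distrib_left)
qed

lemma matrix_entry_le_norm: "\<bar>(A::real^'m^'n) $ i $ j\<bar> \<le> norm A"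
  by (rule order_trans[OF component_le_norm_cart Finite_Cartesian_Product.norm_nth_le])

lemma norm_matrix_le_entry_bound:
  fixes A :: "real^'n^'m"
  assumes "\<And>i j. \<bar>A$i$j\<bar> \<le> b"
  shows "norm A \<le> real CARD('m) * real CARD('n) * b"
proof -
  have "norm A \<le> (\<Sum>i\<in>UNIV. norm (A$i))"
    by (simp add: norm_vec_def L2_set_le_sum)
  also have "\<dots> \<le> (\<Sum>i\<in>UNIV. \<Sum>j\<in>UNIV. \<bar>A$i$j\<bar>)"
    by (intro sum_mono norm_le_l1_cart)
  also have "\<dots> \<le> (\<Sum>i\<in>(UNIV::'m set). \<Sum>j\<in>(UNIV::'n set). b)"
    by (intro sum_mono assms)
  finally show ?thesis by simp
qed

lemma spec_norm_nonneg: "0 \<le> spec_norm A"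
  unfolding spec_norm_def by (intro onorm_pos_le) simp

lemma spec_norm_bound: "norm (A *v x) \<le> spec_norm A * norm x"
  unfolding spec_norm_def by (rule onorm) simp

lemma mat_1_minus_invertible:
  fixes D :: "real^'n^'n"
  assumes "spec_norm D < 1"
  shows "(mat 1 - D) ** matrix_inv (mat 1 - D) = mat 1"
proof -
  have "x = 0" if "(mat 1 - D) *v x = 0" for x
  proof -
    from that have "D *v x = x" by (simp add: matrix_vector_mult_diff_rdistrib)
    then have "norm x \<le> spec_norm D * norm x" by (metis spec_norm_bound)
    with assms show "x = 0"
      by (metis mult_le_cancel_right1 norm_le_zero_iff not_le)
  qed
  then have "\<exists>B. B ** (mat 1 - D) = mat 1" by (simp add: matrix_left_invertible_ker)
  then have "invertible (mat 1 - D)" by (simp add: invertible_left_inverse)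
  then show ?thesis unfolding invertible_def matrix_inv_def by (rule someI_ex[THEN conjunct1])
qed

lemma row_stochastic_mat_1: "row_stochastic (mat 1 :: real^'n^'n)"
  by (simp add: row_stochastic_def mat_def)

lemma row_stochastic_mult:
  assumes "row_stochastic A" "row_stochastic B"
  shows "row_stochastic (A ** B)"
proof -
  have "(\<Sum>j\<in>UNIV. (A ** B) $ i $ j) = (\<Sum>k\<in>UNIV. A$i$k * (\<Sum>j\<in>UNIV. B$k$j))" for i
    by (simp add: matrix_matrix_mult_def sum_distrib_left) (rule sum.swap)
  then show ?thesis
    using assms by (auto simp: row_stochastic_def matrix_matrix_mult_def intro!: sum_nonneg)
qed

lemma row_stochastic_mat_prod: "(\<And>i. row_stochastic (g i)) \<Longrightarrow> row_stochastic (mat_prod g a k)"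
  by (induction k) (auto intro: row_stochastic_mult row_stochastic_mat_1)

lemma row_stochastic_entry_bounds:
  assumes "row_stochastic A"
  shows "0 \<le> A$i$j" "A$i$j \<le> 1"
proof -
  show "0 \<le> A$i$j" using assms by (simp add: row_stochastic_def)
  have "A$i$j \<le> (\<Sum>j\<in>UNIV. A$i$j)"
    using assms by (intro member_le_sum) (auto simp: row_stochastic_def)
  then show "A$i$j \<le> 1" using assms by (simp add: row_stochastic_def)
qed

lemma row_stochastic_mult_entry_bound:
  assumes "row_stochastic A" "\<And>k j. \<bar>X$k$j\<bar> \<le> b"
  shows "\<bar>(A ** X) $ i $ j\<bar> \<le> b"
proof -
  have "\<bar>(A ** X) $ i $ j\<bar> \<le> (\<Sum>k\<in>UNIV. \<bar>A$i$k * X$k$j\<bar>)"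
    unfolding matrix_matrix_mult_def by simp
  also have "\<dots> \<le> (\<Sum>k\<in>UNIV. A$i$k * b)"
    using row_stochastic_entry_bounds[OF assms(1)] assms(2)
    by (intro sum_mono) (simp add: abs_mult mult_left_mono)
  also have "\<dots> = b" using assms(1) by (simp add: row_stochastic_def sum_distrib_right[symmetric])
  finally show ?thesis .
qed

lemma sum_UNIV_Plus:
  "(\<Sum>k\<in>(UNIV::('s::finite + 'f::finite) set). f k) = (\<Sum>a\<in>UNIV. f (Inl a)) + (\<Sum>b\<in>UNIV. f (Inr b))"
  by (subst UNIV_Plus_UNIV[symmetric], subst sum.Plus) auto

lemma stubborn_block_mult_Inl:
  assumes "stubborn_block A"
  shows "(A ** X) $ Inl a = X $ Inl a"
proof -
  have "A $ Inl a $ k = (if k = Inl a then 1 else 0)" for k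
    using assms by (cases k) (auto simp: stubborn_block_def)
  then have "(\<Sum>k\<in>UNIV. A $ Inl a $ k * X $ k $ j) = (\<Sum>k\<in>UNIV. if k = Inl a then X $ k $ j else 0)" for j
    by (intro sum.cong) auto
  then show ?thesis by (simp add: vec_eq_iff matrix_matrix_mult_def)
qed

lemma stubborn_block_mult: "stubborn_block A \<Longrightarrow> stubborn_block B \<Longrightarrow> stubborn_block (A ** B)"
  unfolding stubborn_block_def by (metis stubborn_block_def stubborn_block_mult_Inl)

lemma stubborn_block_mat_1: "stubborn_block (mat 1)"
  by (simp add: stubborn_block_def mat_def)

lemma stubborn_block_mat_prod: "(\<And>i. stubborn_block (g i)) \<Longrightarrow> stubborn_block (mat_prod g a k)"
  by (induction k) (auto intro: stubborn_block_mult stubborn_block_mat_1)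

text \<open>On a matrix whose stubborn rows vanish, a stubborn block acts column by column
  through its block \<open>D\<close>.\<close>
lemma stubborn_block_contraction:
  fixes A :: "real^('s::finite + 'f::finite)^('s + 'f)" and E :: "real^'m^('s + 'f)"
  assumes A: "stubborn_block A" and E: "\<And>a. E $ Inl a = 0"
  shows "norm (A ** E) \<le> spec_norm (blockD A) * norm E"
proof -
  define col where "col j = (\<chi> b. E $ Inr b $ j)" for j
  have AE_Inr: "(A ** E) $ Inr b $ j = (blockD A *v col j) $ b" for b j
    by (simp add: matrix_matrix_mult_def sum_UNIV_Plus E blockD_def col_def matrix_vector_mult_def)
  have norm_cols: "(\<Sum>j\<in>UNIV. (norm (F j))\<^sup>2) = (\<Sum>b\<in>UNIV. \<Sum>j\<in>UNIV. (F j $ b)\<^sup>2)"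
    for F :: "'m \<Rightarrow> real^'f"
    by (simp add: norm_vec_def L2_set_def sum_nonneg) (rule sum.swap)
  have "(norm (A ** E))\<^sup>2 = (\<Sum>j\<in>UNIV. (norm (blockD A *v col j))\<^sup>2)"
    by (simp add: norm_matrix_power2 sum_UNIV_Plus stubborn_block_mult_Inl[OF A] E AE_Inr norm_cols)
  also have "\<dots> \<le> (\<Sum>j\<in>UNIV. (spec_norm (blockD A) * norm (col j))\<^sup>2)"
    by (intro sum_mono power_mono spec_norm_bound) simp
  also have "\<dots> = (spec_norm (blockD A) * norm E)\<^sup>2"
    by (simp add: power_mult_distrib sum_distrib_left[symmetric] norm_cols norm_matrix_power2
        sum_UNIV_Plus E col_def)
  finally show ?thesis
    by (rule power2_le_imp_le) (simp add: spec_norm_nonneg)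
qed

lemma mat_prod_contraction:
  fixes E :: "real^'m^('s::finite + 'f::finite)"
  assumes g: "\<And>i. stubborn_block (g i)" "\<And>i. spec_norm (blockD (g i)) \<le> r"
    and E: "\<And>a. E $ Inl a = 0"
  shows "norm (mat_prod g c k ** E) \<le> r ^ k * norm E"
proof (induction k)
  case (Suc k)
  have r: "0 \<le> r" using g(2) spec_norm_nonneg order_trans by blast
  have "(mat_prod g c k ** E) $ Inl a = 0" for a
    by (simp add: stubborn_block_mult_Inl stubborn_block_mat_prod g E)
  then have "norm (g (c + k) ** (mat_prod g c k ** E)) \<le> r * norm (mat_prod g c k ** E)"
    by (meson g mult_right_mono norm_ge_zero order_trans stubborn_block_contraction)
  also have "\<dots> \<le> r * (r ^ k * norm E)"
    using Suc r by (rule mult_left_mono)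
  finally show ?case by (simp add: matrix_mul_assoc mult.assoc)
qed simp

lemma Winf_mult_Inl: "(Winf A ** X) $ Inl a = X $ Inl a"
proof -
  have "(\<Sum>k\<in>UNIV. Winf A $ Inl a $ k * X $ k $ j) = (\<Sum>k\<in>UNIV. if k = Inl a then X $ k $ j else 0)" for j
    by (intro sum.cong) (auto simp: Winf_def)
  then show ?thesis by (simp add: vec_eq_iff matrix_matrix_mult_def)
qed

text \<open>The free rows of \<open>Winf A ** X\<close> are \<open>G X\<^sub>s\<close> with \<open>G = (I - D)\<^sup>-\<^sup>1 B\<close>,
  and \<open>G = B + D G\<close>.\<close>
lemma Winf_fixed:
  fixes A :: "real^('s::finite + 'f::finite)^('s + 'f)"
  assumes A: "stubborn_block A" and D: "spec_norm (blockD A) < 1"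
  shows "A ** (Winf A ** X) = Winf A ** X"
proof -
  define G where "G = matrix_inv (mat 1 - blockD A) ** blockB A"
  define Y where "Y = Winf A ** X"
  have "(mat 1 - blockD A) ** G = blockB A"
    unfolding G_def by (simp add: matrix_mul_assoc mat_1_minus_invertible[OF D])
  then have "G = blockB A + blockD A ** G"
    by (simp add: matrix_mult_diff_right algebra_simps)
  then have G: "G $ b $ a = blockB A $ b $ a + (blockD A ** G) $ b $ a" for a b
    by (metis vector_add_component)
  have Y_Inl: "Y $ Inl a = X $ Inl a" for a
    unfolding Y_def by (rule Winf_mult_Inl)
  have Y_Inr: "Y $ Inr b $ j = (\<Sum>a\<in>UNIV. G $ b $ a * X $ Inl a $ j)" for b j
    by (simp add: Y_def matrix_matrix_mult_def sum_UNIV_Plus Winf_def G_def)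
  have Inr: "(A ** Y) $ Inr b $ j = Y $ Inr b $ j" for b j
  proof -
    have "(A ** Y) $ Inr b $ j = (\<Sum>a\<in>UNIV. A $ Inr b $ Inl a * X $ Inl a $ j)
        + (\<Sum>b'\<in>UNIV. A $ Inr b $ Inr b' * (\<Sum>a\<in>UNIV. G $ b' $ a * X $ Inl a $ j))"
      by (simp add: matrix_matrix_mult_def[of A] sum_UNIV_Plus Y_Inl Y_Inr)
    also have "\<dots> = (\<Sum>a\<in>UNIV. (blockB A $ b $ a + (blockD A ** G) $ b $ a) * X $ Inl a $ j)"
      by (simp add: blockB_def blockD_def matrix_matrix_mult_def algebra_simps sum.distrib
          sum_distrib_left sum_distrib_right mult.assoc) (rule sum.swap)
    finally show ?thesis by (simp add: Y_Inr G[symmetric])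
  qed
  have "(A ** Y) $ i $ j = Y $ i $ j" for i j
    by (cases i) (simp_all add: stubborn_block_mult_Inl[OF A] Inr)
  then show ?thesis unfolding Y_def[symmetric] by (simp add: vec_eq_iff)
qed

section \<open>Random matrices\<close>

lemma borel_measurable_vec:
  fixes f :: "'a \<Rightarrow> 'b::euclidean_space^'n"
  assumes "\<And>i. (\<lambda>x. f x $ i) \<in> borel_measurable M"
  shows "f \<in> borel_measurable M"
proof (subst borel_measurable_euclidean_space, intro ballI)
  fix b :: "'b^'n" assume "b \<in> Basis"
  then obtain i u where b: "b = axis i u" "u \<in> Basis" unfolding Basis_vec_def by auto
  have "(\<lambda>x. f x \<bullet> b) = (\<lambda>x. f x $ i \<bullet> u)" using b by (simp add: inner_axis)
  then show "(\<lambda>x. f x \<bullet> b) \<in> borel_measurable M" using assms[of i] by simp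
qed

lemma borel_measurable_vec_nth[measurable (raw)]:
  fixes f :: "'a \<Rightarrow> 'b::euclidean_space^'n"
  assumes "f \<in> borel_measurable M"
  shows "(\<lambda>x. f x $ i) \<in> borel_measurable M"
  using assms by (intro borel_measurable_continuous_on[OF _ assms])
    (auto intro: linear_continuous_on bounded_linear_vec_nth)

lemma borel_measurable_matrix_mult[measurable (raw)]:
  fixes f :: "'a \<Rightarrow> real^'k^'n" and g :: "'a \<Rightarrow> real^'m^'k"
  assumes "f \<in> borel_measurable M" "g \<in> borel_measurable M"
  shows "(\<lambda>x. f x ** g x) \<in> borel_measurable M"
  by (intro borel_measurable_vec)
    (simp add: matrix_matrix_mult_def, intro borel_measurable_sum borel_measurable_times
      borel_measurable_vec_nth assms)

lemma integrable_vec_nth: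
  fixes f :: "'a \<Rightarrow> 'b::euclidean_space^'n"
  assumes "integrable M f"
  shows "integrable M (\<lambda>x. f x $ i)"
  using integrable_bounded_linear[OF bounded_linear_vec_nth assms] by simp

lemma integral_vec_nth:
  fixes f :: "'a \<Rightarrow> 'b::euclidean_space^'n"
  assumes "integrable M f"
  shows "integral\<^sup>L M f $ i = integral\<^sup>L M (\<lambda>x. f x $ i)"
  using integral_bounded_linear[OF bounded_linear_vec_nth assms] by simp

lemma integral_matrix_entry:
  fixes f :: "'a \<Rightarrow> real^'m^'n"
  shows "integrable M f \<Longrightarrow> integral\<^sup>L M f $ i $ j = integral\<^sup>L M (\<lambda>x. f x $ i $ j)"
  by (simp add: integral_vec_nth integrable_vec_nth)

lemma integrable_vec:
  fixes f :: "'a \<Rightarrow> 'b::euclidean_space^'n"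
  assumes f: "f \<in> borel_measurable M" and i: "\<And>i. integrable M (\<lambda>x. f x $ i)"
  shows "integrable M f"
proof (rule Bochner_Integration.integrable_bound)
  show "integrable M (\<lambda>x. \<Sum>i\<in>UNIV. norm (f x $ i))"
    using i by (intro Bochner_Integration.integrable_sum integrable_norm)
  have "norm (f x) \<le> (\<Sum>i\<in>UNIV. norm (f x $ i))" for x
    by (simp add: norm_vec_def L2_set_le_sum)
  then show "AE x in M. norm (f x) \<le> norm (\<Sum>i\<in>UNIV. norm (f x $ i))"
    by (intro AE_I2) (simp add: sum_nonneg)
qed (rule f)

lemma (in finite_measure) integrable_bounded:
  fixes f :: "'a \<Rightarrow> real"
  assumes "f \<in> borel_measurable M" "\<And>\<omega>. \<omega> \<in> space M \<Longrightarrow> \<bar>f \<omega>\<bar> \<le> b"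
  shows "integrable M f"
  using assms by (intro integrable_const_bound[where B=b]) auto

lemma (in finite_measure) integrable_inner_bounded:
  fixes U V :: "'a \<Rightarrow> real^'m^'n"
  assumes [measurable]: "U \<in> borel_measurable M" "V \<in> borel_measurable M"
    and U: "\<And>\<omega> i j. \<omega> \<in> space M \<Longrightarrow> \<bar>U \<omega> $ i $ j\<bar> \<le> b"
    and V: "\<And>\<omega> i j. \<omega> \<in> space M \<Longrightarrow> \<bar>V \<omega> $ i $ j\<bar> \<le> c"
  shows "integrable M (\<lambda>\<omega>. inner (U \<omega>) (V \<omega>))"
proof (rule integrable_bounded)
  fix \<omega> assume \<omega>: "\<omega> \<in> space M"
  have b: "0 \<le> b" using U[OF \<omega>] by (meson abs_ge_zero order_trans)
  have "\<bar>inner (U \<omega>) (V \<omega>)\<bar> \<le> norm (U \<omega>) * norm (V \<omega>)" by (rule Cauchy_Schwarz_ineq2)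
  also have "\<dots> \<le> (real CARD('n) * real CARD('m) * b) * (real CARD('n) * real CARD('m) * c)"
    by (intro mult_mono norm_matrix_le_entry_bound U V \<omega>) (use b in auto)
  finally show "\<bar>inner (U \<omega>) (V \<omega>)\<bar> \<le> \<dots>" .
qed measurable

lemma (in finite_measure) integrable_matrix_bounded:
  fixes f :: "'a \<Rightarrow> real^'m^'n"
  assumes "f \<in> borel_measurable M" "\<And>\<omega> i j. \<omega> \<in> space M \<Longrightarrow> \<bar>f \<omega> $ i $ j\<bar> \<le> b"
  shows "integrable M f"
  using assms by (intro integrable_vec integrable_bounded) (auto intro!: borel_measurable_vec_nth)

lemma (in prob_space) abs_integral_le_bound:
  fixes f :: "'a \<Rightarrow> real"
  assumes "integrable M f" "\<And>\<omega>. \<omega> \<in> space M \<Longrightarrow> \<bar>f \<omega>\<bar> \<le> b"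
  shows "\<bar>integral\<^sup>L M f\<bar> \<le> b"
proof -
  have "\<bar>integral\<^sup>L M f\<bar> \<le> integral\<^sup>L M (\<lambda>x. \<bar>f x\<bar>)" by (rule integral_abs_bound)
  also have "\<dots> \<le> integral\<^sup>L M (\<lambda>_. b)"
    using assms by (intro Bochner_Integration.integral_mono) auto
  finally show ?thesis by (simp add: prob_space)
qed

lemma preimages_subset_sigma_sets_factor:
  assumes F: "F \<in> measurable N K" and XU: "\<And>\<omega>. \<omega> \<in> \<Omega> \<Longrightarrow> U \<omega> \<in> space N \<and> X \<omega> = F (U \<omega>)"
  shows "{X -` A \<inter> \<Omega> | A. A \<in> sets K} \<subseteq> sigma_sets \<Omega> {U -` B \<inter> \<Omega> | B. B \<in> sets N}"
proof (intro subsetI sigma_sets.Basic, elim CollectE exE conjE)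
  fix x A assume x: "x = X -` A \<inter> \<Omega>" and A: "A \<in> sets K"
  then have "x = U -` (F -` A \<inter> space N) \<inter> \<Omega>" using XU by auto
  then show "x \<in> {U -` B \<inter> \<Omega> | B. B \<in> sets N}" using measurable_sets[OF F A] by blast
qed

lemma (in prob_space) indep_var_if_indep_generators:
  fixes X :: "'a \<Rightarrow> real" and Y :: "'a \<Rightarrow> real"
  assumes I: "indep_set (sigma_sets (space M) GA) (sigma_sets (space M) GB)"
    and X: "X \<in> borel_measurable M" and Y: "Y \<in> borel_measurable M"
    and gX: "{X -` A \<inter> space M | A. A \<in> sets borel} \<subseteq> sigma_sets (space M) GA"
    and gY: "{Y -` A \<inter> space M | A. A \<in> sets borel} \<subseteq> sigma_sets (space M) GB"
  shows "indep_var borel X borel Y"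
  unfolding indep_var_eq
proof (intro conjI)
  show "random_variable borel X" "random_variable borel Y" using X Y by auto
  show "indep_set (sigma_sets (space M) {X -` A \<inter> space M |A. A \<in> sets borel})
     (sigma_sets (space M) {Y -` A \<inter> space M |A. A \<in> sets borel})"
    using I unfolding indep_set_def
    by (rule indep_sets_mono_sets)
      (use sigma_sets_mono[OF gX] sigma_sets_mono[OF gY] in \<open>auto split: bool.split\<close>)
qed

lemma measurable_mat_prod_PiM:
  assumes "{a..<a+k} \<subseteq> I"
  shows "(\<lambda>g. mat_prod g a k) \<in> borel_measurable (PiM I (\<lambda>_. borel :: (real^'n^'n) measure))"
  using assms
proof (induction k)
  case (Suc k)
  then have "a + k \<in> I" "{a..<a+k} \<subseteq> I" by auto
  with Suc.IH show ?case
    by (simp add: borel_measurable_matrix_mult measurable_component_singleton)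
qed simp

locale random_stubborn_network = prob_space M for M :: "'a measure" +
  fixes W :: "nat \<Rightarrow> 'a \<Rightarrow> real^('s::finite + 'f::finite)^('s + 'f)"
  assumes W_measurable[measurable]: "\<And>t. W t \<in> borel_measurable M"
    and W_indep: "indep_vars (\<lambda>_. borel) W UNIV"
    and W_ident: "\<And>t. distr M borel (W t) = distr M borel (W 0)"
    and W_row_stochastic: "\<And>t \<omega>. \<omega> \<in> space M \<Longrightarrow> row_stochastic (W t \<omega>)"
    and W_stubborn: "\<And>t \<omega>. \<omega> \<in> space M \<Longrightarrow> stubborn_block (W t \<omega>)"
begin

definition Wbar :: "real^('s + 'f)^('s + 'f)" where
  "Wbar = integral\<^sup>L M (W 0)"

definition W_on :: "nat set \<Rightarrow> 'a \<Rightarrow> nat \<Rightarrow> real^('s + 'f)^('s + 'f)" where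
  "W_on I \<omega> = restrict (\<lambda>i. W i \<omega>) I"

lemma integral_mult_disjoint_times:
  fixes F G :: "(nat \<Rightarrow> real^('s + 'f)^('s + 'f)) \<Rightarrow> real"
  assumes IJ: "I \<inter> J = {}"
    and F: "F \<in> borel_measurable (PiM I (\<lambda>_. borel))" and G: "G \<in> borel_measurable (PiM J (\<lambda>_. borel))"
    and iF: "integrable M (\<lambda>\<omega>. F (W_on I \<omega>))" and iG: "integrable M (\<lambda>\<omega>. G (W_on J \<omega>))"
  shows "integral\<^sup>L M (\<lambda>\<omega>. F (W_on I \<omega>) * G (W_on J \<omega>))
       = integral\<^sup>L M (\<lambda>\<omega>. F (W_on I \<omega>)) * integral\<^sup>L M (\<lambda>\<omega>. G (W_on J \<omega>))"
proof -
  have "indep_var (PiM I (\<lambda>_. borel)) (W_on I) (PiM J (\<lambda>_. borel)) (W_on J)"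
    unfolding W_on_def by (rule indep_var_restrict[OF W_indep IJ]) simp_all
  then have "indep_var borel (F \<circ> W_on I) borel (G \<circ> W_on J)"
    by (rule indep_var_compose[OF _ F G])
  from indep_var_lebesgue_integral[OF this] iF iG show ?thesis by (simp add: comp_def)
qed

lemma mat_prod_W_on: "{a..<a+k} \<subseteq> I \<Longrightarrow> mat_prod (W_on I \<omega>) a k = mat_prod (\<lambda>i. W i \<omega>) a k"
  unfolding W_on_def by (intro mat_prod_cong) auto

lemma measurable_mat_prod_W[measurable]: "(\<lambda>\<omega>. mat_prod (\<lambda>i. W i \<omega>) a k) \<in> borel_measurable M"
  by (induction k) simp_all

lemma row_stochastic_mat_prod_W: "\<omega> \<in> space M \<Longrightarrow> row_stochastic (mat_prod (\<lambda>i. W i \<omega>) a k)"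
  by (intro row_stochastic_mat_prod W_row_stochastic)

lemma stubborn_block_mat_prod_W: "\<omega> \<in> space M \<Longrightarrow> stubborn_block (mat_prod (\<lambda>i. W i \<omega>) a k)"
  by (intro stubborn_block_mat_prod W_stubborn)

lemma integrable_mat_prod_W_entry: "integrable M (\<lambda>\<omega>. mat_prod (\<lambda>i. W i \<omega>) a k $ i $ j)"
  by (rule integrable_bounded[where b=1])
    (use row_stochastic_entry_bounds[OF row_stochastic_mat_prod_W] in auto)

lemma integrable_W: "integrable M (W t)"
  by (rule integrable_matrix_bounded[where b=1])
    (use row_stochastic_entry_bounds[OF W_row_stochastic] in auto)

lemma integral_W_entry: "integral\<^sup>L M (\<lambda>\<omega>. W t \<omega> $ i $ j) = Wbar $ i $ j"
proof -
  have "integral\<^sup>L M (\<lambda>\<omega>. W t \<omega> $ i $ j) = integral\<^sup>L (distr M borel (W t)) (\<lambda>A. A $ i $ j)"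
    by (rule integral_distr[symmetric]) measurable
  also have "\<dots> = integral\<^sup>L M (\<lambda>\<omega>. W 0 \<omega> $ i $ j)"
    unfolding W_ident[of t] by (rule integral_distr) measurable
  finally show ?thesis by (simp add: Wbar_def integral_matrix_entry integrable_W)
qed

lemma row_stochastic_Wbar: "row_stochastic Wbar"
proof -
  have "(\<Sum>j\<in>UNIV. Wbar $ i $ j) = (\<Sum>j\<in>UNIV. integral\<^sup>L M (\<lambda>\<omega>. W 0 \<omega> $ i $ j))" for i
    by (simp add: integral_W_entry)
  also have "\<dots> i = integral\<^sup>L M (\<lambda>\<omega>. \<Sum>j\<in>UNIV. W 0 \<omega> $ i $ j)" for i
    by (simp add: integrable_vec_nth integrable_W)
  also have "\<dots> i = 1" for i
    using W_row_stochastic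
    by (subst Bochner_Integration.integral_cong[where g="\<lambda>_. 1", OF refl]) (auto simp: row_stochastic_def prob_space)
  moreover have "0 \<le> Wbar $ i $ j" for i j
    unfolding integral_W_entry[of 0, symmetric] using W_row_stochastic
    by (intro integral_nonneg_AE AE_I2) (auto simp: row_stochastic_def)
  ultimately show ?thesis by (simp add: row_stochastic_def)
qed

lemma stubborn_block_Wbar: "stubborn_block Wbar"
proof -
  have "W 0 \<omega> $ Inl a $ j = (if j = Inl a then 1 else 0)" if "\<omega> \<in> space M" for \<omega> a j
    using W_stubborn[OF that, of 0] by (cases j) (auto simp: stubborn_block_def)
  then have "integral\<^sup>L M (\<lambda>\<omega>. W 0 \<omega> $ Inl a $ j) = integral\<^sup>L M (\<lambda>_. if j = Inl a then 1 else 0)" for a j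
    by (intro Bochner_Integration.integral_cong) auto
  then show ?thesis by (simp add: stubborn_block_def integral_W_entry[of 0, symmetric] prob_space)
qed

lemma integral_mat_prod_W_entry:
  "integral\<^sup>L M (\<lambda>\<omega>. mat_prod (\<lambda>i. W i \<omega>) a k $ i $ j) = mat_pow Wbar k $ i $ j"
proof (induction k arbitrary: i j)
  case 0 then show ?case by (simp add: mat_def prob_space)
next
  case (Suc k)
  have "integral\<^sup>L M (\<lambda>\<omega>. W (a+k) \<omega> $ i $ l * mat_prod (\<lambda>i. W i \<omega>) a k $ l $ j)
      = Wbar $ i $ l * mat_pow Wbar k $ l $ j" for l
  proof -
    let ?F = "\<lambda>g::nat \<Rightarrow> real^('s + 'f)^('s + 'f). g (a+k) $ i $ l"
    let ?G = "\<lambda>g::nat \<Rightarrow> real^('s + 'f)^('s + 'f). mat_prod g a k $ l $ j"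
    have F: "?F (W_on {a+k} \<omega>) = W (a+k) \<omega> $ i $ l" for \<omega>
      by (simp add: W_on_def)
    have G: "?G (W_on {a..<a+k} \<omega>) = mat_prod (\<lambda>i. W i \<omega>) a k $ l $ j" for \<omega>
      by (simp add: mat_prod_W_on)
    have "integral\<^sup>L M (\<lambda>\<omega>. ?F (W_on {a+k} \<omega>) * ?G (W_on {a..<a+k} \<omega>))
        = integral\<^sup>L M (\<lambda>\<omega>. ?F (W_on {a+k} \<omega>)) * integral\<^sup>L M (\<lambda>\<omega>. ?G (W_on {a..<a+k} \<omega>))"
      by (intro integral_mult_disjoint_times borel_measurable_vec_nth measurable_component_singleton
          measurable_mat_prod_PiM) (auto simp: F G integrable_vec_nth integrable_W integrable_mat_prod_W_entry)
    then show ?thesis by (simp only: F G integral_W_entry Suc)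
  qed
  moreover have "integrable M (\<lambda>\<omega>. W (a+k) \<omega> $ i $ l * mat_prod (\<lambda>i. W i \<omega>) a k $ l $ j)" for l
    using row_stochastic_entry_bounds[OF row_stochastic_mat_prod_W]
      row_stochastic_entry_bounds[OF W_row_stochastic]
    by (intro integrable_bounded[where b=1]) (auto simp: abs_mult intro: mult_le_one)
  ultimately show ?case by (simp add: matrix_matrix_mult_def)
qed


lemma integral_mat_prod_entry_mult_past:
  fixes G :: "(nat \<Rightarrow> real^('s + 'f)^('s + 'f)) \<Rightarrow> real"
  assumes G: "G \<in> borel_measurable (PiM {0..<t} (\<lambda>_. borel))"
    and iG: "integrable M (\<lambda>\<omega>. G (W_on {0..<t} \<omega>))"
  shows "integral\<^sup>L M (\<lambda>\<omega>. mat_prod (\<lambda>i. W i \<omega>) t k $ i $ l * G (W_on {0..<t} \<omega>))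
    = mat_pow Wbar k $ i $ l * integral\<^sup>L M (\<lambda>\<omega>. G (W_on {0..<t} \<omega>))"
proof -
  let ?F = "\<lambda>g::nat \<Rightarrow> real^('s + 'f)^('s + 'f). mat_prod g t k $ i $ l"
  have F: "?F (W_on {t..<t+k} \<omega>) = mat_prod (\<lambda>i. W i \<omega>) t k $ i $ l" for \<omega>
    by (simp add: mat_prod_W_on)
  have "integrable M (\<lambda>\<omega>. ?F (W_on {t..<t+k} \<omega>))"
    unfolding F by (rule integrable_mat_prod_W_entry)
  then have "integral\<^sup>L M (\<lambda>\<omega>. ?F (W_on {t..<t+k} \<omega>) * G (W_on {0..<t} \<omega>))
      = integral\<^sup>L M (\<lambda>\<omega>. ?F (W_on {t..<t+k} \<omega>)) * integral\<^sup>L M (\<lambda>\<omega>. G (W_on {0..<t} \<omega>))"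
    using G iG by (intro integral_mult_disjoint_times borel_measurable_vec_nth measurable_mat_prod_PiM) auto
  then show ?thesis by (simp only: F integral_mat_prod_W_entry)
qed
end

section \<open>Opinion dynamics\<close>

locale stubborn_opinion_dynamics = random_stubborn_network M W
  for M :: "'a measure" and W :: "nat \<Rightarrow> 'a \<Rightarrow> real^('s::finite + 'f::finite)^('s + 'f)" +
  fixes X0 :: "real^'m::finite^('s + 'f)"
  assumes Dbar_contraction: "spec_norm (blockD (integral\<^sup>L M (W 0))) < 1"
begin

definition limit :: "real^'m^('s + 'f)" where
  "limit = Winf Wbar ** X0"

definition deviation :: "nat \<Rightarrow> 'a \<Rightarrow> real^'m^('s + 'f)" where
  "deviation t \<omega> = opinion W X0 t \<omega> - limit"

definition bound :: real where
  "bound = norm X0 + norm limit"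

lemma spec_norm_Dbar_less_1: "spec_norm (blockD Wbar) < 1"
  using Dbar_contraction by (simp add: Wbar_def)

lemma mat_pow_Wbar_limit: "mat_pow Wbar k ** limit = limit"
  by (induction k)
    (simp_all add: limit_def Winf_fixed[OF stubborn_block_Wbar spec_norm_Dbar_less_1]
      flip: matrix_mul_assoc)

lemma opinion_shift: "opinion W X0 (t + k) \<omega> = mat_prod (\<lambda>i. W i \<omega>) t k ** opinion W X0 t \<omega>"
  by (simp add: opinion_eq_mat_prod mat_prod_add matrix_mul_assoc)

lemma measurable_opinion[measurable]: "(\<lambda>\<omega>. opinion W X0 t \<omega>) \<in> borel_measurable M"
  unfolding opinion_eq_mat_prod by measurable

lemma measurable_deviation[measurable]: "deviation t \<in> borel_measurable M"
  unfolding deviation_def by measurable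

lemma deviation_Inl: "\<omega> \<in> space M \<Longrightarrow> deviation t \<omega> $ Inl a = 0"
  by (simp add: deviation_def limit_def opinion_eq_mat_prod Winf_mult_Inl
      stubborn_block_mult_Inl[OF stubborn_block_mat_prod_W])

lemma opinion_entry_bound: "\<omega> \<in> space M \<Longrightarrow> \<bar>opinion W X0 t \<omega> $ i $ j\<bar> \<le> norm X0"
  unfolding opinion_eq_mat_prod
  by (intro row_stochastic_mult_entry_bound row_stochastic_mat_prod_W matrix_entry_le_norm)

lemma deviation_entry_bound: "\<omega> \<in> space M \<Longrightarrow> \<bar>deviation t \<omega> $ i $ j\<bar> \<le> bound"
  unfolding deviation_def bound_def
  using opinion_entry_bound[of \<omega> t i j] matrix_entry_le_norm[of limit i j] by simp

lemma integrable_opinion: "integrable M (\<lambda>\<omega>. opinion W X0 t \<omega>)"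
  by (rule integrable_matrix_bounded[OF _ opinion_entry_bound]) measurable

lemma integral_opinion: "integral\<^sup>L M (\<lambda>\<omega>. opinion W X0 t \<omega>) = mat_pow Wbar t ** X0"
proof -
  have "integral\<^sup>L M (\<lambda>\<omega>. opinion W X0 t \<omega>) $ i $ j
      = integral\<^sup>L M (\<lambda>\<omega>. \<Sum>k\<in>UNIV. mat_prod (\<lambda>i. W i \<omega>) 0 t $ i $ k * X0 $ k $ j)" for i j
    by (simp add: integral_matrix_entry[OF integrable_opinion])
      (simp add: opinion_eq_mat_prod matrix_matrix_mult_def)
  also have "\<dots> i j = (mat_pow Wbar t ** X0) $ i $ j" for i j
    by (simp add: integrable_mat_prod_W_entry integral_mat_prod_W_entry matrix_matrix_mult_def)
  finally show ?thesis by (simp add: vec_eq_iff)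
qed

lemma norm_integral_opinion_minus_limit:
  "norm (integral\<^sup>L M (\<lambda>\<omega>. opinion W X0 t \<omega>) - limit) \<le> spec_norm (blockD Wbar) ^ t * norm (X0 - limit)"
proof -
  have "integral\<^sup>L M (\<lambda>\<omega>. opinion W X0 t \<omega>) - limit = mat_pow Wbar t ** (X0 - limit)"
    by (simp add: integral_opinion matrix_mult_diff_left mat_pow_Wbar_limit)
  also have "norm \<dots> \<le> spec_norm (blockD Wbar) ^ t * norm (X0 - limit)"
    by (intro mat_prod_contraction stubborn_block_Wbar order_refl) (simp add: limit_def Winf_mult_Inl)
  finally show ?thesis .
qed

lemma integrable_inner_deviation:
  assumes "V \<in> borel_measurable M" "\<And>\<omega> i j. \<omega> \<in> space M \<Longrightarrow> \<bar>V \<omega> $ i $ j\<bar> \<le> c"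
  shows "integrable M (\<lambda>\<omega>. inner (deviation t \<omega>) (V \<omega>))"
  by (rule integrable_inner_bounded[OF _ assms(1) deviation_entry_bound assms(2)]) auto

lemma row_stochastic_mult_opinion_bound:
  "\<omega> \<in> space M \<Longrightarrow> row_stochastic P \<Longrightarrow> \<bar>(P ** opinion W X0 t \<omega>) $ i $ j\<bar> \<le> norm X0"
  by (intro row_stochastic_mult_entry_bound opinion_entry_bound)

text \<open>The factors after time \<open>t\<close> are independent of the state at time \<open>t\<close>, so they can be
  replaced by their mean.\<close>
lemma integral_inner_deviation_mult_opinion:
  "integral\<^sup>L M (\<lambda>\<omega>. inner (deviation t \<omega>) (mat_prod (\<lambda>i. W i \<omega>) t k ** opinion W X0 t \<omega>))
     = integral\<^sup>L M (\<lambda>\<omega>. inner (deviation t \<omega>) (mat_pow Wbar k ** opinion W X0 t \<omega>))"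
proof -
  let ?Q = "\<lambda>\<omega>. mat_prod (\<lambda>i. W i \<omega>) t k"
  let ?h = "\<lambda>i l \<omega>. \<Sum>j\<in>UNIV. deviation t \<omega> $ i $ j * opinion W X0 t \<omega> $ l $ j"
  let ?G = "\<lambda>i l (g::nat \<Rightarrow> real^('s + 'f)^('s + 'f)).
    \<Sum>j\<in>UNIV. (mat_prod g 0 t ** X0 - limit) $ i $ j * (mat_prod g 0 t ** X0) $ l $ j"
  have h_bound: "\<bar>?h i l \<omega>\<bar> \<le> real CARD('m) * (bound * norm X0)" if "\<omega> \<in> space M" for i l \<omega>
  proof -
    have "\<bar>?h i l \<omega>\<bar> \<le> (\<Sum>j\<in>(UNIV::'m set). bound * norm X0)"
      using deviation_entry_bound[OF that] opinion_entry_bound[OF that]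
      by (intro order_trans[OF sum_abs] sum_mono) (auto simp: abs_mult bound_def intro!: mult_mono)
    then show ?thesis by simp
  qed
  have h_int: "integrable M (?h i l)" for i l
    by (rule integrable_bounded[OF _ h_bound]) measurable
  have Qh_int: "integrable M (\<lambda>\<omega>. ?Q \<omega> $ i $ l * ?h i l \<omega>)" for i l
  proof (rule integrable_bounded)
    fix \<omega> assume \<omega>: "\<omega> \<in> space M"
    show "\<bar>?Q \<omega> $ i $ l * ?h i l \<omega>\<bar> \<le> 1 * (real CARD('m) * (bound * norm X0))"
      unfolding abs_mult using row_stochastic_entry_bounds[OF row_stochastic_mat_prod_W[OF \<omega>]]
      by (intro mult_mono h_bound \<omega>) auto
  qed measurable
  have G: "?G i l (W_on {0..<t} \<omega>) = ?h i l \<omega>" for i l \<omega>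
    using mat_prod_W_on[of 0 t "{0..<t}" \<omega>] by (simp add: deviation_def opinion_eq_mat_prod)
  have [measurable]: "(\<lambda>g. mat_prod g 0 t) \<in> borel_measurable (PiM {0..<t} (\<lambda>_. borel :: (real^('s + 'f)^('s + 'f)) measure))"
    by (rule measurable_mat_prod_PiM) auto
  have "integral\<^sup>L M (\<lambda>\<omega>. ?Q \<omega> $ i $ l * ?h i l \<omega>) = mat_pow Wbar k $ i $ l * integral\<^sup>L M (?h i l)" for i l
  proof -
    have "?G i l \<in> borel_measurable (PiM {0..<t} (\<lambda>_. borel))" by measurable
    moreover have "integrable M (\<lambda>\<omega>. ?G i l (W_on {0..<t} \<omega>))" unfolding G by (rule h_int)
    ultimately show ?thesis
      using integral_mat_prod_entry_mult_past[of "?G i l" t k i l] unfolding G by simp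
  qed
  then show ?thesis
    by (simp add: inner_matrix_mult_right Qh_int h_int)
qed

text \<open>Only \<open>Wbar\<close>, not the random products, fixes \<open>limit\<close>; hence \<open>deviation (t + k)\<close>
  is split as \<open>Q x(t) - limit\<close> before averaging.\<close>
lemma integral_inner_deviation_shift:
  "integral\<^sup>L M (\<lambda>\<omega>. inner (deviation t \<omega>) (deviation (t + k) \<omega>))
     = integral\<^sup>L M (\<lambda>\<omega>. inner (deviation t \<omega>) (mat_pow Wbar k ** deviation t \<omega>))"
proof -
  let ?Q = "\<lambda>\<omega>. mat_prod (\<lambda>i. W i \<omega>) t k" and ?x = "\<lambda>\<omega>. opinion W X0 t \<omega>"
  have "integrable M (\<lambda>\<omega>. inner (deviation t \<omega>) (?Q \<omega> ** ?x \<omega>))"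
    by (rule integrable_inner_deviation[OF _ row_stochastic_mult_opinion_bound[OF _ row_stochastic_mat_prod_W]])
      auto
  moreover have "integrable M (\<lambda>\<omega>. inner (deviation t \<omega>) (mat_pow Wbar k ** ?x \<omega>))"
    by (rule integrable_inner_deviation[OF _ row_stochastic_mult_opinion_bound[OF _
          row_stochastic_mat_prod[OF row_stochastic_Wbar]]]) auto
  moreover have "integrable M (\<lambda>\<omega>. inner (deviation t \<omega>) limit)"
    by (rule integrable_inner_deviation[OF _ matrix_entry_le_norm]) auto
  ultimately have "integral\<^sup>L M (\<lambda>\<omega>. inner (deviation t \<omega>) (?Q \<omega> ** ?x \<omega>) - inner (deviation t \<omega>) limit)
      = integral\<^sup>L M (\<lambda>\<omega>. inner (deviation t \<omega>) (mat_pow Wbar k ** ?x \<omega>) - inner (deviation t \<omega>) limit)"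
    by (simp add: integral_inner_deviation_mult_opinion)
  then show ?thesis
    by (simp add: deviation_def[of "t + k"] deviation_def[of t] opinion_shift inner_diff_right
        matrix_mult_diff_left mat_pow_Wbar_limit)
qed

lemma norm_deviation_le:
  "\<omega> \<in> space M \<Longrightarrow> norm (deviation t \<omega>) \<le> real CARD('s + 'f) * real CARD('m) * bound"
  by (intro norm_matrix_le_entry_bound deviation_entry_bound)

lemma abs_integral_inner_deviation_le:
  "\<bar>integral\<^sup>L M (\<lambda>\<omega>. inner (deviation t \<omega>) (deviation t' \<omega>))\<bar>
     \<le> spec_norm (blockD Wbar) ^ (t - t' + (t' - t)) * (real CARD('s + 'f) * real CARD('m) * bound)\<^sup>2"
proof -
  let ?K = "real CARD('s + 'f) * real CARD('m) * bound"
  let ?r = "spec_norm (blockD Wbar)"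
  have shifted: "\<bar>integral\<^sup>L M (\<lambda>\<omega>. inner (deviation t \<omega>) (deviation (t + k) \<omega>))\<bar> \<le> ?r ^ k * ?K\<^sup>2" for t k
    unfolding integral_inner_deviation_shift
  proof (rule abs_integral_le_bound)
    show "integrable M (\<lambda>\<omega>. inner (deviation t \<omega>) (mat_pow Wbar k ** deviation t \<omega>))"
      by (rule integrable_inner_deviation[OF _ row_stochastic_mult_entry_bound[OF
            row_stochastic_mat_prod[OF row_stochastic_Wbar] deviation_entry_bound]]) auto
    fix \<omega> assume \<omega>: "\<omega> \<in> space M"
    have "norm (mat_pow Wbar k ** deviation t \<omega>) \<le> ?r ^ k * norm (deviation t \<omega>)"
      by (intro mat_prod_contraction stubborn_block_Wbar order_refl deviation_Inl \<omega>)
    then have "norm (deviation t \<omega>) * norm (mat_pow Wbar k ** deviation t \<omega>) \<le> ?K * (?r ^ k * ?K)"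
      using norm_deviation_le[OF \<omega>, of t] spec_norm_nonneg
      by (meson mult_mono norm_ge_zero order_trans zero_le_power mult_left_mono)
    then show "\<bar>inner (deviation t \<omega>) (mat_pow Wbar k ** deviation t \<omega>)\<bar> \<le> ?r ^ k * ?K\<^sup>2"
      by (intro order_trans[OF Cauchy_Schwarz_ineq2]) (simp add: power2_eq_square mult_ac)
  qed
  show ?thesis
  proof (cases "t \<le> t'")
    case True
    then show ?thesis using shifted[of t "t' - t"] by simp
  next
    case False
    then show ?thesis using shifted[of t' "t - t'"] by (simp add: inner_commute)
  qed
qed

end

section \<open>Noisy observations\<close>

locale noisy_stubborn_opinion_dynamics = stubborn_opinion_dynamics M W X0
  for M :: "'a measure" and W :: "nat \<Rightarrow> 'a \<Rightarrow> real^('s::finite + 'f::finite)^('s + 'f)"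
    and X0 :: "real^'m::finite^('s + 'f)" +
  fixes Nz :: "nat \<Rightarrow> 'a \<Rightarrow> real^'m^('s + 'f)" and \<sigma> :: real
  assumes Nz_measurable[measurable]: "\<And>t. Nz t \<in> borel_measurable M"
    and Nz_indep: "indep_vars (\<lambda>_. borel) (\<lambda>(t, i, j) \<omega>. Nz t \<omega> $ i $ j) UNIV"
    and Nz_square_integrable: "\<And>t i j. integrable M (\<lambda>\<omega>. (Nz t \<omega> $ i $ j)\<^sup>2)"
    and Nz_mean: "\<And>t i j. integral\<^sup>L M (\<lambda>\<omega>. Nz t \<omega> $ i $ j) = 0"
    and Nz_variance:
      "\<And>t i j. integral\<^sup>L M (\<lambda>\<omega>. (Nz t \<omega> $ i $ j - integral\<^sup>L M (\<lambda>\<omega>. Nz t \<omega> $ i $ j))\<^sup>2) \<le> \<sigma>\<^sup>2"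
    and W_Nz_indep: "indep_set
       (sigma_sets (space M) {(\<lambda>\<omega> t. W t \<omega>) -` A \<inter> space M | A. A \<in> sets (Pi\<^sub>M UNIV (\<lambda>_::nat. borel))})
       (sigma_sets (space M) {(\<lambda>\<omega> (t, i, j). Nz t \<omega> $ i $ j) -` A \<inter> space M
                               | A. A \<in> sets (Pi\<^sub>M UNIV (\<lambda>_::nat \<times> ('s + 'f) \<times> 'm. borel))})"
begin

lemma integrable_Nz_entry: "integrable M (\<lambda>\<omega>. Nz t \<omega> $ i $ j)"
  by (rule square_integrable_imp_integrable[OF _ Nz_square_integrable]) measurable

lemma integrable_Nz: "integrable M (Nz t)"
  by (intro integrable_vec integrable_Nz_entry) measurable

lemma integral_Nz: "integral\<^sup>L M (Nz t) = 0"
  by (simp add: vec_eq_iff integral_matrix_entry integrable_Nz Nz_mean)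

lemma integral_deviation_mult_Nz:
  shows "integrable M (\<lambda>\<omega>. deviation t \<omega> $ i $ j * Nz t' \<omega> $ i $ j)"
    and "integral\<^sup>L M (\<lambda>\<omega>. deviation t \<omega> $ i $ j * Nz t' \<omega> $ i $ j) = 0"
proof -
  have [measurable]: "(\<lambda>h. mat_prod h 0 t) \<in> borel_measurable (Pi\<^sub>M UNIV (\<lambda>_. borel :: (real^('s + 'f)^('s + 'f)) measure))"
    by (rule measurable_mat_prod_PiM) simp
  have I: "indep_var borel (\<lambda>\<omega>. deviation t \<omega> $ i $ j) borel (\<lambda>\<omega>. Nz t' \<omega> $ i $ j)"
  proof (rule indep_var_if_indep_generators[OF W_Nz_indep])
    show "{(\<lambda>\<omega>. deviation t \<omega> $ i $ j) -` A \<inter> space M |A. A \<in> sets borel}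
        \<subseteq> sigma_sets (space M) {(\<lambda>\<omega> t. W t \<omega>) -` A \<inter> space M | A. A \<in> sets (Pi\<^sub>M UNIV (\<lambda>_. borel))}"
      by (rule preimages_subset_sigma_sets_factor[where F="\<lambda>h. (mat_prod h 0 t ** X0 - limit) $ i $ j"])
        (auto simp: space_PiM deviation_def opinion_eq_mat_prod)
    show "{(\<lambda>\<omega>. Nz t' \<omega> $ i $ j) -` A \<inter> space M |A. A \<in> sets borel}
        \<subseteq> sigma_sets (space M) {(\<lambda>\<omega> (t, i, j). Nz t \<omega> $ i $ j) -` A \<inter> space M
                               | A. A \<in> sets (Pi\<^sub>M UNIV (\<lambda>_. borel))}"
      by (rule preimages_subset_sigma_sets_factor[where F="\<lambda>g. g (t', i, j)"]) (auto simp: space_PiM)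
  qed measurable
  have "integrable M (\<lambda>\<omega>. deviation t \<omega> $ i $ j)"
    by (rule integrable_bounded[OF _ deviation_entry_bound]) measurable
  with indep_var_integrable[OF I] indep_var_lebesgue_integral[OF I] integrable_Nz_entry
  show "integrable M (\<lambda>\<omega>. deviation t \<omega> $ i $ j * Nz t' \<omega> $ i $ j)"
    and "integral\<^sup>L M (\<lambda>\<omega>. deviation t \<omega> $ i $ j * Nz t' \<omega> $ i $ j) = 0"
    by (simp_all add: Nz_mean)
qed

lemma Nz_uncorrelated:
  assumes "t \<noteq> t'"
  shows "integrable M (\<lambda>\<omega>. Nz t \<omega> $ i $ j * Nz t' \<omega> $ i $ j)"
    and "integral\<^sup>L M (\<lambda>\<omega>. Nz t \<omega> $ i $ j * Nz t' \<omega> $ i $ j) = 0"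
proof -
  let ?X = "\<lambda>(t, i, j) \<omega>. Nz t \<omega> $ i $ j"
  have I: "indep_vars (\<lambda>_. borel) ?X {(t, i, j), (t', i, j)}"
    by (rule indep_vars_subset[OF Nz_indep]) auto
  have "(\<Prod>p\<in>{(t, i, j), (t', i, j)}. ?X p \<omega>) = Nz t \<omega> $ i $ j * Nz t' \<omega> $ i $ j" for \<omega>
    using assms by simp
  with indep_vars_integrable[OF _ I] indep_vars_lebesgue_integral[OF _ I] assms
  show "integrable M (\<lambda>\<omega>. Nz t \<omega> $ i $ j * Nz t' \<omega> $ i $ j)"
    and "integral\<^sup>L M (\<lambda>\<omega>. Nz t \<omega> $ i $ j * Nz t' \<omega> $ i $ j) = 0"
    by (auto simp: integrable_Nz_entry Nz_mean)
qed

lemma integrable_Nz_mult_Nz: "integrable M (\<lambda>\<omega>. Nz t \<omega> $ i $ j * Nz t' \<omega> $ i $ j)"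
  using Nz_square_integrable[of t i j] Nz_uncorrelated(1)[of t t' i j]
  by (cases "t = t'") (simp_all add: power2_eq_square)

lemma integral_Nz_mult_Nz_le:
  "integral\<^sup>L M (\<lambda>\<omega>. Nz t \<omega> $ i $ j * Nz t' \<omega> $ i $ j) \<le> (if t = t' then \<sigma>\<^sup>2 else 0)"
  using Nz_variance[of t i j] Nz_uncorrelated(2)[of t t' i j]
  by (cases "t = t'") (simp_all add: Nz_mean power2_eq_square)

definition residual :: "nat \<Rightarrow> 'a \<Rightarrow> real^'m^('s + 'f)" where
  "residual t \<omega> = deviation t \<omega> + Nz t \<omega>"

lemma estimator_minus_limit:
  assumes "finite T" "T \<noteq> {}"
  shows "estimator W X0 Nz T \<omega> - limit = (1 / real (card T)) *\<^sub>R (\<Sum>t\<in>T. residual t \<omega>)"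
proof -
  have "estimator W X0 Nz T \<omega> - limit
      = (1 / real (card T)) *\<^sub>R (\<Sum>t\<in>T. opinion W X0 t \<omega> + Nz t \<omega>) - (1 / real (card T)) *\<^sub>R (\<Sum>t\<in>T. limit)"
    by (simp only: estimator_def scaleR_average_const[OF assms])
  also have "\<dots> = (1 / real (card T)) *\<^sub>R (\<Sum>t\<in>T. residual t \<omega>)"
    unfolding scaleR_diff_right[symmetric] sum_subtractf[symmetric]
    by (simp add: residual_def deviation_def algebra_simps)
  finally show ?thesis .
qed

lemma integral_estimator:
  assumes "finite T"
  shows "integral\<^sup>L M (estimator W X0 Nz T)
    = (1 / real (card T)) *\<^sub>R (\<Sum>t\<in>T. integral\<^sup>L M (\<lambda>\<omega>. opinion W X0 t \<omega>))"
  unfolding estimator_def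
  by (simp add: integrable_opinion integrable_Nz integral_Nz Bochner_Integration.integrable_sum)

lemma norm_integral_estimator_minus_limit_le:
  assumes T: "finite T" "T \<noteq> {}" "T \<subseteq> {To..}"
  shows "norm (integral\<^sup>L M (estimator W X0 Nz T) - limit)
    \<le> spec_norm (blockD Wbar) ^ To * norm (X0 - limit)"
proof -
  let ?r = "spec_norm (blockD Wbar)"
  have N: "0 < real (card T)" using T by (simp add: card_gt_0_iff)
  have "norm (integral\<^sup>L M (\<lambda>\<omega>. opinion W X0 t \<omega>) - limit) \<le> ?r ^ To * norm (X0 - limit)"
    if "t \<in> T" for t
    using norm_integral_opinion_minus_limit[of t] T that spec_norm_Dbar_less_1
    by (meson atLeast_iff mult_right_mono norm_ge_zero order_trans power_decreasing spec_norm_nonneg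
        less_imp_le subsetD)
  then have "norm (\<Sum>t\<in>T. integral\<^sup>L M (\<lambda>\<omega>. opinion W X0 t \<omega>) - limit)
      \<le> real (card T) * (?r ^ To * norm (X0 - limit))"
    by (intro order_trans[OF norm_sum]) (simp add: sum_bounded_above)
  moreover have "integral\<^sup>L M (estimator W X0 Nz T) - limit
      = (1 / real (card T)) *\<^sub>R (\<Sum>t\<in>T. integral\<^sup>L M (\<lambda>\<omega>. opinion W X0 t \<omega>) - limit)"
    unfolding scaleR_diff_right sum_subtractf
    by (simp only: integral_estimator[OF T(1)] scaleR_average_const[OF T(1,2)])
  ultimately show ?thesis
    using N by (simp add: divide_le_eq mult.commute)
qed

lemma inner_residual:
  "inner (residual t \<omega>) (residual t' \<omega>) = inner (deviation t \<omega>) (deviation t' \<omega>)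
    + (\<Sum>i\<in>UNIV. \<Sum>j\<in>UNIV. deviation t \<omega> $ i $ j * Nz t' \<omega> $ i $ j)
    + (\<Sum>i\<in>UNIV. \<Sum>j\<in>UNIV. deviation t' \<omega> $ i $ j * Nz t \<omega> $ i $ j)
    + (\<Sum>i\<in>UNIV. \<Sum>j\<in>UNIV. Nz t \<omega> $ i $ j * Nz t' \<omega> $ i $ j)"
  unfolding residual_def inner_add_left inner_add_right
  by (simp add: inner_matrix[of "Nz t \<omega>"] inner_matrix[of "deviation t \<omega>" "Nz t' \<omega>"]
      inner_matrix[of "Nz t \<omega>" "deviation t' \<omega>"] mult.commute)

lemma integrable_inner_residual: "integrable M (\<lambda>\<omega>. inner (residual t \<omega>) (residual t' \<omega>))"
  unfolding inner_residual
  by (intro Bochner_Integration.integrable_add Bochner_Integration.integrable_sum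
      integrable_inner_deviation[OF measurable_deviation deviation_entry_bound]
      integral_deviation_mult_Nz integrable_Nz_mult_Nz) auto

lemma integral_inner_residual_le:
  "integral\<^sup>L M (\<lambda>\<omega>. inner (residual t \<omega>) (residual t' \<omega>))
    \<le> spec_norm (blockD Wbar) ^ (t - t' + (t' - t)) * (real CARD('s + 'f) * real CARD('m) * bound)\<^sup>2
      + (if t = t' then real CARD('s + 'f) * real CARD('m) * \<sigma>\<^sup>2 else 0)"
proof -
  have "integral\<^sup>L M (\<lambda>\<omega>. inner (residual t \<omega>) (residual t' \<omega>))
      = integral\<^sup>L M (\<lambda>\<omega>. inner (deviation t \<omega>) (deviation t' \<omega>))
        + (\<Sum>i\<in>UNIV. \<Sum>j\<in>UNIV. integral\<^sup>L M (\<lambda>\<omega>. Nz t \<omega> $ i $ j * Nz t' \<omega> $ i $ j))"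
    unfolding inner_residual
    by (simp add: integrable_inner_deviation[OF measurable_deviation deviation_entry_bound]
        integral_deviation_mult_Nz integrable_Nz_mult_Nz Bochner_Integration.integrable_sum)
  also have "\<dots> \<le> spec_norm (blockD Wbar) ^ (t - t' + (t' - t)) * (real CARD('s + 'f) * real CARD('m) * bound)\<^sup>2
      + (\<Sum>i\<in>(UNIV::('s + 'f) set). \<Sum>j\<in>(UNIV::'m set). if t = t' then \<sigma>\<^sup>2 else 0)"
    by (intro add_mono sum_mono integral_Nz_mult_Nz_le order_trans[OF abs_ge_self abs_integral_inner_deviation_le])
  also have "(\<Sum>i\<in>(UNIV::('s + 'f) set). \<Sum>j\<in>(UNIV::'m set). if t = t' then \<sigma>\<^sup>2 else 0)
      = (if t = t' then real CARD('s + 'f) * real CARD('m) * \<sigma>\<^sup>2 else 0)"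
    by simp
  finally show ?thesis .
qed

lemma mean_square_error_le:
  assumes T: "finite T" "T \<noteq> {}"
  shows "integral\<^sup>L M (\<lambda>\<omega>. (norm (estimator W X0 Nz T \<omega> - limit))\<^sup>2)
    \<le> (2 / (1 - spec_norm (blockD Wbar)) * (real CARD('s + 'f) * real CARD('m) * bound)\<^sup>2
        + real CARD('s + 'f) * real CARD('m) * \<sigma>\<^sup>2) / real (card T)"
    (is "_ \<le> ?C / _")
proof -
  let ?r = "spec_norm (blockD Wbar)" and ?K = "real CARD('s + 'f) * real CARD('m) * bound"
    and ?N = "real (card T)"
  have N: "0 < ?N" using T by (simp add: card_gt_0_iff)
  have "(norm (estimator W X0 Nz T \<omega> - limit))\<^sup>2
      = (1 / ?N)\<^sup>2 * (\<Sum>t\<in>T. \<Sum>t'\<in>T. inner (residual t \<omega>) (residual t' \<omega>))" for \<omega>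
    by (simp only: estimator_minus_limit[OF T] norm_scaleR power_mult_distrib power2_abs
        power2_norm_eq_inner inner_sum_left inner_sum_right) (subst sum.swap, rule refl)
  then have "integral\<^sup>L M (\<lambda>\<omega>. (norm (estimator W X0 Nz T \<omega> - limit))\<^sup>2)
      = (1 / ?N)\<^sup>2 * (\<Sum>t\<in>T. \<Sum>t'\<in>T. integral\<^sup>L M (\<lambda>\<omega>. inner (residual t \<omega>) (residual t' \<omega>)))"
    by (simp add: integrable_inner_residual Bochner_Integration.integrable_sum)
  also have "\<dots> \<le> (1 / ?N)\<^sup>2 * (\<Sum>t\<in>T. \<Sum>t'\<in>T. ?r ^ (t - t' + (t' - t)) * ?K\<^sup>2
      + (if t = t' then real CARD('s + 'f) * real CARD('m) * \<sigma>\<^sup>2 else 0))"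
    by (intro mult_left_mono sum_mono integral_inner_residual_le) simp
  also have "\<dots> = (1 / ?N)\<^sup>2 * (\<Sum>t\<in>T. (\<Sum>t'\<in>T. ?r ^ (t - t' + (t' - t))) * ?K\<^sup>2 + real CARD('s + 'f) * real CARD('m) * \<sigma>\<^sup>2)"
    using T by (simp add: sum.distrib sum_distrib_right)
  also have "\<dots> \<le> (1 / ?N)\<^sup>2 * (\<Sum>t\<in>T. ?C)"
    using spec_norm_Dbar_less_1 spec_norm_nonneg T
    by (intro mult_left_mono sum_mono add_mono order_refl mult_right_mono sum_power_dist_le) auto
  also have "\<dots> = ?C / ?N"
    using N by (simp add: power2_eq_square)
  finally show ?thesis .
qed

lemma bias_eventually_less:
  assumes "0 < \<epsilon>"
  shows "\<exists>To. \<forall>T. finite T \<and> T \<noteq> {} \<and> T \<subseteq> {To..} \<longrightarrow>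
    norm (integral\<^sup>L M (estimator W X0 Nz T) - limit) < \<epsilon>"
proof -
  obtain To where "spec_norm (blockD Wbar) ^ To * norm (X0 - limit) < \<epsilon>"
    using power_mult_eventually_less[OF spec_norm_nonneg spec_norm_Dbar_less_1 assms] by blast
  with norm_integral_estimator_minus_limit_le show ?thesis by (meson le_less_trans)
qed

lemma mean_square_error_eventually_less:
  assumes "0 < \<epsilon>"
  shows "\<exists>N. \<forall>T. finite T \<and> N \<le> card T \<longrightarrow>
    integral\<^sup>L M (\<lambda>\<omega>. (norm (estimator W X0 Nz T \<omega> - limit))\<^sup>2) < \<epsilon>"
proof -
  define C where "C = 2 / (1 - spec_norm (blockD Wbar)) * (real CARD('s + 'f) * real CARD('m) * bound)\<^sup>2
    + real CARD('s + 'f) * real CARD('m) * \<sigma>\<^sup>2"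
  have "0 \<le> C" using spec_norm_Dbar_less_1 by (simp add: C_def)
  obtain N :: nat where N: "C / \<epsilon> < N" using reals_Archimedean2 by blast
  have N_pos: "0 < real N"
    using N divide_nonneg_pos[OF \<open>0 \<le> C\<close> assms] by linarith
  have "integral\<^sup>L M (\<lambda>\<omega>. (norm (estimator W X0 Nz T \<omega> - limit))\<^sup>2) < \<epsilon>"
    if T: "finite T" "N \<le> card T" for T
  proof -
    have "T \<noteq> {}" using T N_pos by auto
    then have "integral\<^sup>L M (\<lambda>\<omega>. (norm (estimator W X0 Nz T \<omega> - limit))\<^sup>2) \<le> C / card T"
      using mean_square_error_le T by (simp add: C_def)
    also have "\<dots> \<le> C / N"
      using T N_pos \<open>0 \<le> C\<close> by (intro divide_left_mono) auto
    also have "\<dots> < \<epsilon>"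
      using N N_pos assms by (simp add: field_simps)
    finally show ?thesis .
  qed
  then show ?thesis by blast
qed

end

theorem theorem2:
  fixes M :: "'a measure"
    and W :: "nat \<Rightarrow> 'a \<Rightarrow> real^('s::finite + 'f::finite)^('s + 'f)"
    and Nz :: "nat \<Rightarrow> 'a \<Rightarrow> real^('m::finite)^('s + 'f)"
    and X0 :: "real^'m^('s + 'f)"
    and \<sigma> :: real
  assumes P: "prob_space M"
    and W_meas: "\<And>t. W t \<in> borel_measurable M"
    and W_indep: "prob_space.indep_vars M (\<lambda>_. borel) W UNIV"
    and W_ident: "\<And>t. distr M borel (W t) = distr M borel (W 0)"
    and W_stoch: "\<And>t \<omega>. \<omega> \<in> space M \<Longrightarrow> row_stochastic (W t \<omega>)"
    and W_block: "\<And>t \<omega>. \<omega> \<in> space M \<Longrightarrow> stubborn_block (W t \<omega>)"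
    and D_lt1: "spec_norm (blockD (integral\<^sup>L M (W 0))) < 1"
    and D_eq: "\<And>t. spec_norm (blockD (integral\<^sup>L M (W 0)))
                    = integral\<^sup>L M (\<lambda>\<omega>. spec_norm (blockD (W t \<omega>)))"
    and N_meas: "\<And>t. Nz t \<in> borel_measurable M"
    and N_indep: "prob_space.indep_vars M (\<lambda>_. borel) (\<lambda>(t, i, j) \<omega>. Nz t \<omega> $ i $ j) UNIV"
    and N_ident: "\<And>t i j t' i' j'. distr M borel (\<lambda>\<omega>. Nz t \<omega> $ i $ j)
                                    = distr M borel (\<lambda>\<omega>. Nz t' \<omega> $ i' $ j')"
    and N_sq_int: "\<And>t i j. integrable M (\<lambda>\<omega>. (Nz t \<omega> $ i $ j)\<^sup>2)"
    and N_mean: "\<And>t i j. integral\<^sup>L M (\<lambda>\<omega>. Nz t \<omega> $ i $ j) = 0"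
    and N_var: "\<And>t i j. integral\<^sup>L M (\<lambda>\<omega>. (Nz t \<omega> $ i $ j - integral\<^sup>L M (\<lambda>\<omega>. Nz t \<omega> $ i $ j))\<^sup>2) \<le> \<sigma>\<^sup>2"
    and WN_indep: "prob_space.indep_set M
       (sigma_sets (space M) {(\<lambda>\<omega> t. W t \<omega>) -` A \<inter> space M | A. A \<in> sets (Pi\<^sub>M UNIV (\<lambda>_::nat. borel))})
       (sigma_sets (space M) {(\<lambda>\<omega> (t, i, j). Nz t \<omega> $ i $ j) -` A \<inter> space M
                               | A. A \<in> sets (Pi\<^sub>M UNIV (\<lambda>_::nat \<times> ('s + 'f) \<times> 'm. borel))})"
  shows "(\<forall>\<epsilon>>0. \<exists>To. \<forall>T. finite T \<and> T \<noteq> {} \<and> T \<subseteq> {To..} \<longrightarrow>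
            norm (integral\<^sup>L M (estimator W X0 Nz T) - Winf (integral\<^sup>L M (W 0)) ** X0) < \<epsilon>)
       \<and> (\<forall>\<epsilon>>0. \<exists>To N. \<forall>T. finite T \<and> T \<subseteq> {To..} \<and> N \<le> card T \<longrightarrow>
            integral\<^sup>L M (\<lambda>\<omega>. (norm (estimator W X0 Nz T \<omega> - Winf (integral\<^sup>L M (W 0)) ** X0))\<^sup>2) < \<epsilon>)"
proof -
  interpret noisy_stubborn_opinion_dynamics M W X0 Nz \<sigma>
    using P W_meas W_indep W_ident W_stoch W_block D_lt1 N_meas N_indep N_sq_int N_mean N_var WN_indep
    by (simp add: noisy_stubborn_opinion_dynamics_def noisy_stubborn_opinion_dynamics_axioms_def
        stubborn_opinion_dynamics_def stubborn_opinion_dynamics_axioms_def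
        random_stubborn_network_def random_stubborn_network_axioms_def)
  have limit: "Winf (integral\<^sup>L M (W 0)) ** X0 = limit" by (simp add: limit_def Wbar_def)
  show ?thesis unfolding limit
  proof (intro conjI allI impI)
    fix \<epsilon> :: real assume "0 < \<epsilon>"
    then show "\<exists>To. \<forall>T. finite T \<and> T \<noteq> {} \<and> T \<subseteq> {To..} \<longrightarrow>
        norm (integral\<^sup>L M (estimator W X0 Nz T) - limit) < \<epsilon>"
      by (rule bias_eventually_less)
  next
    fix \<epsilon> :: real assume "0 < \<epsilon>"
    then obtain N where "\<forall>T. finite T \<and> N \<le> card T \<longrightarrow>
        integral\<^sup>L M (\<lambda>\<omega>. (norm (estimator W X0 Nz T \<omega> - limit))\<^sup>2) < \<epsilon>"
      using mean_square_error_eventually_less by blast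
    then show "\<exists>To N. \<forall>T. finite T \<and> T \<subseteq> {To..} \<and> N \<le> card T \<longrightarrow>
        integral\<^sup>L M (\<lambda>\<omega>. (norm (estimator W X0 Nz T \<omega> - limit))\<^sup>2) < \<epsilon>"
      by blast
  qed
qed

end
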